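(* Fix $\nu\in(0,1]$, $k\in\mathbb{N}$, $\lambda_1,\dots,\lambda_k>0$, and let $M^\nu(t)$ be the counting process whose distribution $p_j^\nu(t)=\mathbb{P}\{M^\nu(t)=j\}$ solves the fractional system in the context with $p_0^\nu(0)=1$, $p_j^\nu(0)=0$ for $j\ge1$. Then for every $m\in\mathbb{N}$ and $t\ge0$, \[ \mathbb{E}\{[M^\nu(t)]^m\}=\sum_{r=0}^{m}\frac{t^{r\nu}}{\Gamma(r\nu+1)}\sum_{i_1+\dots+i_k=r}\binom{r}{i_1,\dots,i_k}\lambda_1^{i_1}\cdots\lambda_k^{i_k}\sum_{n_1+\dots+n_k=m}\binom{m}{n_1,\dots,n_k}\left[\frac{d^{n_1}}{ds^{n_1}}(e^{s}-1)^{i_1}\cdots\frac{d^{n_k}}{ds^{n_k}}(e^{ks}-1)^{i_k}\right]\Big|_{s=0}, \] with sums over nonnegative integers.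
   Context: Let $\Lambda=\lambda_1+\dots+\lambda_k$. Caputo derivative: for $0<\nu<1$, $\frac{d^\nu f(t)}{dt^\nu}=\frac{1}{\Gamma(1-\nu)}\int_0^t \frac{f'(s)}{(t-s)^{\nu}}\,ds$; for $\nu=1$ it is $f'(t)$. The system: $\frac{d^\nu p_0^\nu}{dt^\nu}=-\Lambda p_0^\nu$; $\frac{d^\nu p_j^\nu}{dt^\nu}=\sum_{r=1}^{j}\lambda_r p_{j-r}^\nu-\Lambda p_j^\nu$ for $j=1,\dots,k-1$; $\frac{d^\nu p_j^\nu}{dt^\nu}=\sum_{r=1}^{k}\lambda_r p_{j-r}^\nu-\Lambda p_j^\nu$ for $j\ge k$. *)

theory Defs
  imports "HOL-Analysis.Analysis"
begin

definition caputo :: "real \<Rightarrow> (real \<Rightarrow> real) \<Rightarrow> real \<Rightarrow> real" where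
  "caputo \<nu> f t =
     (if \<nu> = 1 then deriv f t
      else (1 / Gamma (1 - \<nu>)) * integral {0..t} (\<lambda>s. deriv f s / (t - s) powr \<nu>))"

text \<open>Tuples (i_1,...,i_k) of nonnegative integers with i_1+...+i_k = r,
  encoded as functions nat => nat supported on {1..k}.\<close>
definition compositions :: "nat \<Rightarrow> nat \<Rightarrow> (nat \<Rightarrow> nat) set" where
  "compositions k r = {i. (\<forall>l. l \<notin> {1..k} \<longrightarrow> i l = 0) \<and> (\<Sum>l=1..k. i l) = r}"

definition multinom :: "nat \<Rightarrow> nat \<Rightarrow> (nat \<Rightarrow> nat) \<Rightarrow> real" where
  "multinom k r i = fact r / (\<Prod>l=1..k. fact (i l))"

end

theory Submission
  imports Defs "HOL-Real_Asymp.Real_Asymp"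
begin

text \<open>The moments \<open>mu m t = (\<Sum>j. j ^ m * p j t)\<close> formally satisfy the triangular system
  \<open>D^\<nu> (mu m) = (\<Sum>b<m. kappa m b * mu b)\<close>, \<open>mu m 0 = 0 ^ m\<close>, with
  \<open>kappa m b = (\<Sum>l. lam l * (m choose b) * l ^ (m - b))\<close>, because a jump of size \<open>l\<close> changes \<open>j ^ m\<close>
  by \<open>(j + l) ^ m - j ^ m\<close>. The right-hand side of the theorem is
  \<open>M m t = (\<Sum>r\<le>m. c r m * t ^ (r\<nu>) / \<Gamma> (r\<nu> + 1))\<close> with \<open>c r m = D^m (G ^ r) 0\<close> and
  \<open>G s = (\<Sum>l. lam l * (exp (l s) - 1))\<close>; from \<open>c (r + 1) m = (\<Sum>b<m. kappa m b * c r b)\<close> and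
  \<open>D^\<nu> (t ^ (r\<nu>) / \<Gamma> (r\<nu> + 1)) = t ^ ((r - 1)\<nu>) / \<Gamma> ((r - 1)\<nu> + 1)\<close>, \<open>M\<close> solves the same system.

  To avoid differentiating the series termwise, \<open>M m\<close> is compared with the truncated moments
  \<open>S J m = (\<Sum>j\<le>J. j ^ m * p j)\<close>: their Caputo derivative is at most \<open>(\<Sum>b<m. kappa m b * S J b)\<close>
  and at least that minus a boundary term of order \<open>S J (m + 1) / J\<close>. A comparison principle (a
  function vanishing at \<open>0\<close> with nonpositive Caputo derivative stays nonpositive, since at a positive
  maximum the Caputo derivative is positive) gives, by induction on \<open>m\<close>, \<open>S J m \<le> M m\<close> and
  \<open>M m - S J m \<longrightarrow> 0\<close> uniformly on compact intervals.\<close>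

section \<open>Compositions and the multinomial theorem\<close>

lemma finite_compositions: "finite (compositions k r)"
proof -
  have "compositions k r \<subseteq> {f. \<forall>x. (x \<in> {1..k} \<longrightarrow> f x \<in> {..r}) \<and> (x \<notin> {1..k} \<longrightarrow> f x = 0)}"
  proof
    fix f assume "f \<in> compositions k r"
    then have zero: "\<And>l. l \<notin> {1..k} \<Longrightarrow> f l = 0" and sum: "(\<Sum>l=1..k. f l) = r"
      by (auto simp: compositions_def)
    have "f x \<le> r" if "x \<in> {1..k}" for x
      using member_le_sum[of x "{1..k}" f] that sum by auto
    with zero show "f \<in> {f. \<forall>x. (x \<in> {1..k} \<longrightarrow> f x \<in> {..r}) \<and> (x \<notin> {1..k} \<longrightarrow> f x = 0)}"
      by auto
  qed
  then show ?thesis by (rule finite_subset) (rule finite_set_of_finite_funs, auto)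
qed

lemma compositions_0: "compositions 0 m = (if m = 0 then {\<lambda>_. 0} else {})"
  by (auto simp: compositions_def)

lemma compositions_Suc:
  "compositions (Suc k) m = (\<lambda>(a, n). n(Suc k := a)) ` (SIGMA a:{..m}. compositions k (m - a))"
proof (intro equalityI subsetI)
  fix f assume f: "f \<in> compositions (Suc k) m"
  have sum: "(\<Sum>l=1..Suc k. f l) = m" and zero: "\<And>l. l \<notin> {1..Suc k} \<Longrightarrow> f l = 0"
    using f by (auto simp: compositions_def)
  have "(\<Sum>l=1..k. (f(Suc k := 0)) l) = (\<Sum>l=1..k. f l)" by (rule sum.cong) auto
  with sum zero have "f(Suc k := 0) \<in> compositions k (m - f (Suc k))"
    by (auto simp: compositions_def)
  moreover have "f (Suc k) \<le> m" using sum by simp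
  ultimately show "f \<in> (\<lambda>(a, n). n(Suc k := a)) ` (SIGMA a:{..m}. compositions k (m - a))"
    by (auto intro!: image_eqI[where x="(f (Suc k), f(Suc k := 0))"])
next
  fix f assume "f \<in> (\<lambda>(a, n). n(Suc k := a)) ` (SIGMA a:{..m}. compositions k (m - a))"
  then obtain a n where a: "a \<le> m" and n: "n \<in> compositions k (m - a)" and f: "f = n(Suc k := a)"
    by auto
  have "(\<Sum>l=1..k. f l) = (\<Sum>l=1..k. n l)" unfolding f by (rule sum.cong) auto
  with n a show "f \<in> compositions (Suc k) m" unfolding f by (auto simp: compositions_def)
qed

lemma inj_on_compositions_Suc:
  "inj_on (\<lambda>(a, n). n(Suc k := a)) (SIGMA a:{..m}. compositions k (m - a))"
proof (rule inj_onI, clarsimp)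
  fix a n b n'
  assume "n \<in> compositions k (m - a)" "n' \<in> compositions k (m - b)"
    and eq: "n(Suc k := a) = n'(Suc k := b)"
  then have "n (Suc k) = 0" "n' (Suc k) = 0" by (auto simp: compositions_def)
  moreover have "a = b" using fun_cong[OF eq, of "Suc k"] by simp
  ultimately show "a = b \<and> n = n'" using eq by (metis fun_upd_triv fun_upd_upd)
qed

lemma multinom_Suc:
  assumes "a \<le> m"
  shows "multinom (Suc k) m (n(Suc k := a)) = real (m choose a) * multinom k (m - a) n"
proof -
  have "(\<Prod>l=1..k. fact ((n(Suc k := a)) l) :: real) = (\<Prod>l=1..k. fact (n l))"
    by (rule prod.cong) auto
  then have "(\<Prod>l=1..Suc k. fact ((n(Suc k := a)) l) :: real) = (\<Prod>l=1..k. fact (n l)) * fact a"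
    by simp
  moreover have "(\<Prod>l=1..k. fact (n l) :: real) \<noteq> 0" by (simp add: prod_zero_iff)
  ultimately show ?thesis
    using assms by (simp add: multinom_def binomial_fact field_simps)
qed

lemma multinomial_theorem:
  fixes x :: "nat \<Rightarrow> real"
  shows "(\<Sum>l=1..k. x l) ^ m = (\<Sum>n\<in>compositions k m. multinom k m n * (\<Prod>l=1..k. x l ^ n l))"
proof (induction k arbitrary: m)
  case 0
  then show ?case by (simp add: compositions_0 multinom_def)
next
  case (Suc k)
  let ?C = "SIGMA a:{..m}. compositions k (m - a)"
  have summand: "real (m choose a) * multinom k (m - a) n * ((\<Prod>l=1..k. x l ^ n l) * x (Suc k) ^ a) =
      multinom (Suc k) m (n(Suc k := a)) * (\<Prod>l=1..Suc k. x l ^ (n(Suc k := a)) l)"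
    if "a \<le> m" for a n
  proof -
    have "(\<Prod>l=1..k. x l ^ (n(Suc k := a)) l) = (\<Prod>l=1..k. x l ^ n l)"
      by (rule prod.cong) auto
    with multinom_Suc[OF that] show ?thesis by simp
  qed
  have "(\<Sum>l=1..Suc k. x l) ^ m = (x (Suc k) + (\<Sum>l=1..k. x l)) ^ m"
    by (simp add: add.commute)
  also have "\<dots> = (\<Sum>a\<le>m. real (m choose a) * x (Suc k) ^ a * (\<Sum>l=1..k. x l) ^ (m - a))"
    by (rule binomial_ring)
  also have "\<dots> = (\<Sum>(a, n)\<in>?C.
      real (m choose a) * multinom k (m - a) n * ((\<Prod>l=1..k. x l ^ n l) * x (Suc k) ^ a))"
    unfolding Suc.IH
    by (subst sum.Sigma[symmetric])
       (auto simp: finite_compositions sum_distrib_left sum_distrib_right mult_ac)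
  also have "\<dots> = (\<Sum>(a, n)\<in>?C. multinom (Suc k) m (n(Suc k := a)) *
      (\<Prod>l=1..Suc k. x l ^ (n(Suc k := a)) l))"
    using summand by (intro sum.cong) auto
  also have "\<dots> = (\<Sum>n\<in>compositions (Suc k) m. multinom (Suc k) m n * (\<Prod>l=1..Suc k. x l ^ n l))"
    unfolding compositions_Suc
    by (subst sum.reindex[OF inj_on_compositions_Suc]) (simp add: case_prod_beta)
  finally show ?case .
qed

section \<open>The coefficients of the moment formula\<close>

lemma higher_deriv_exp_sum:
  fixes w e :: "'a \<Rightarrow> real"
  assumes "finite X"
  shows "(deriv ^^ n) (\<lambda>s. \<Sum>x\<in>X. w x * exp (e x * s)) =
         (\<lambda>s. \<Sum>x\<in>X. w x * e x ^ n * exp (e x * s))"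
proof (induction n arbitrary: w)
  case 0
  then show ?case by simp
next
  case (Suc n)
  have "deriv (\<lambda>s. \<Sum>x\<in>X. w x * exp (e x * s)) = (\<lambda>s. \<Sum>x\<in>X. (w x * e x) * exp (e x * s))"
    by (rule ext, rule DERIV_imp_deriv) (auto intro!: derivative_eq_intros simp: mult_ac)
  then show ?case
    by (simp only: funpow_Suc_right o_apply Suc.IH) (simp add: mult_ac)
qed

lemma higher_deriv_exp_sum_diff:
  fixes w v a e :: "'a \<Rightarrow> real"
  assumes "finite X"
  shows "(deriv ^^ n) (\<lambda>s. (\<Sum>x\<in>X. w x * exp (a x * s)) - (\<Sum>x\<in>X. v x * exp (e x * s))) =
     (\<lambda>s. (\<Sum>x\<in>X. w x * a x ^ n * exp (a x * s)) - (\<Sum>x\<in>X. v x * e x ^ n * exp (e x * s)))"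
proof -
  have split: "(\<Sum>x\<in>X. f x * exp (a x * s)) - (\<Sum>x\<in>X. g x * exp (e x * s)) =
      (\<Sum>z\<in>X <+> X. case_sum f (\<lambda>x. - g x) z * exp (case_sum a e z * s))" for f g s
    using assms by (simp add: sum.Plus sum_negf)
  show ?thesis
    unfolding split higher_deriv_exp_sum[OF finite_Plus[OF assms assms]]
    by (rule ext) (simp add: assms sum.Plus sum_negf)
qed

definition expm1_coeff :: "nat \<Rightarrow> nat \<Rightarrow> real" where
  "expm1_coeff i q = real (i choose q) * (-1) ^ (i - q)"

lemma expm1_power_exp_sum:
  "(exp (real l * s) - 1) ^ i = (\<Sum>q\<le>i. expm1_coeff i q * exp (real (l * q) * s))"
proof -
  have "(exp (real l * s) - 1) ^ i = (exp (real l * s) + (-1)) ^ i" by simp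
  also have "\<dots> = (\<Sum>q\<le>i. real (i choose q) * exp (real l * s) ^ q * (-1) ^ (i - q))"
    by (rule binomial_ring)
  also have "\<dots> = (\<Sum>q\<le>i. expm1_coeff i q * exp (real (l * q) * s))"
    by (intro sum.cong refl) (simp add: expm1_coeff_def exp_of_nat_mult[symmetric] mult_ac)
  finally show ?thesis .
qed

lemma higher_deriv_expm1_power_at_0:
  "(deriv ^^ n) (\<lambda>s. (exp (real l * s) - 1) ^ i) 0 = (\<Sum>q\<le>i. expm1_coeff i q * real (l * q) ^ n)"
  by (simp add: expm1_power_exp_sum higher_deriv_exp_sum)

text \<open>Formally \<open>E exp (s M(t)) = (\<Sum>r. frac_power \<nu> r t * laplace_exponent k lam s ^ r)\<close>, a
  Mittag-Leffler function (for \<open>\<nu> = 1\<close> the compound Poisson exponential); differentiating \<open>m\<close>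
  times at \<open>s = 0\<close> is where the coefficients \<open>moment_coeff\<close> of the moments come from.\<close>

definition laplace_exponent :: "nat \<Rightarrow> (nat \<Rightarrow> real) \<Rightarrow> real \<Rightarrow> real" where
  "laplace_exponent k lam s = (\<Sum>l=1..k. lam l * (exp (real l * s) - 1))"

definition moment_coeff :: "nat \<Rightarrow> (nat \<Rightarrow> real) \<Rightarrow> nat \<Rightarrow> nat \<Rightarrow> real" where
  "moment_coeff k lam r m = (deriv ^^ m) (\<lambda>s. laplace_exponent k lam s ^ r) 0"

text \<open>Expanding \<open>laplace_exponent k lam s ^ r\<close> by the multinomial and binomial theorems gives
  one exponential \<open>exp (expansion_rate k x * s)\<close> for each composition \<open>i\<close> of \<open>r\<close> together with
  a choice \<open>q l \<le> i l\<close> of binomial index for each factor \<open>(exp (l s) - 1) ^ i l\<close>.\<close>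

definition expansion_index :: "nat \<Rightarrow> nat \<Rightarrow> ((nat \<Rightarrow> nat) \<times> (nat \<Rightarrow> nat)) set" where
  "expansion_index k r = (SIGMA i:compositions k r. PiE {1..k} (\<lambda>l. {..i l}))"

definition expansion_weight ::
    "nat \<Rightarrow> (nat \<Rightarrow> real) \<Rightarrow> nat \<Rightarrow> (nat \<Rightarrow> nat) \<times> (nat \<Rightarrow> nat) \<Rightarrow> real" where
  "expansion_weight k lam r x = multinom k r (fst x) * (\<Prod>l=1..k. lam l ^ fst x l) *
     (\<Prod>l=1..k. expm1_coeff (fst x l) (snd x l))"

definition expansion_rate :: "nat \<Rightarrow> (nat \<Rightarrow> nat) \<times> (nat \<Rightarrow> nat) \<Rightarrow> real" where
  "expansion_rate k x = real (\<Sum>l=1..k. l * snd x l)"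

lemma finite_expansion_index: "finite (expansion_index k r)"
  unfolding expansion_index_def by (auto intro!: finite_SigmaI finite_PiE finite_compositions)

lemma sum_expansion_index:
  "(\<Sum>i\<in>compositions k r. \<Sum>q\<in>PiE {1..k} (\<lambda>l. {..i l}). f (i, q)) = (\<Sum>x\<in>expansion_index k r. f x)"
  unfolding expansion_index_def
  by (subst sum.Sigma) (auto simp: finite_compositions intro!: finite_PiE)

lemma expm1_power_prod_exp_sum:
  "(\<Prod>l=1..k. (exp (real l * s) - 1) ^ i l) =
   (\<Sum>q\<in>PiE {1..k} (\<lambda>l. {..i l}). (\<Prod>l=1..k. expm1_coeff (i l) (q l)) * exp (expansion_rate k (i, q) * s))"
proof -
  have "(\<Prod>l=1..k. (exp (real l * s) - 1) ^ i l) =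
      (\<Prod>l=1..k. \<Sum>q\<le>i l. expm1_coeff (i l) q * exp (real (l * q) * s))"
    by (simp add: expm1_power_exp_sum)
  also have "\<dots> = (\<Sum>q\<in>PiE {1..k} (\<lambda>l. {..i l}). \<Prod>l=1..k. expm1_coeff (i l) (q l) * exp (real (l * q l) * s))"
    by (rule prod_sum_PiE) auto
  finally show ?thesis
    by (simp add: prod.distrib expansion_rate_def exp_sum sum_distrib_right)
qed

lemma laplace_exponent_power_exp_sum:
  "laplace_exponent k lam s ^ r =
   (\<Sum>x\<in>expansion_index k r. expansion_weight k lam r x * exp (expansion_rate k x * s))"
proof -
  have "laplace_exponent k lam s ^ r = (\<Sum>i\<in>compositions k r. multinom k r i *
          ((\<Prod>l=1..k. lam l ^ i l) * (\<Prod>l=1..k. (exp (real l * s) - 1) ^ i l)))"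
    unfolding laplace_exponent_def multinomial_theorem
    by (simp add: power_mult_distrib prod.distrib)
  also have "\<dots> = (\<Sum>x\<in>expansion_index k r. expansion_weight k lam r x * exp (expansion_rate k x * s))"
    unfolding expm1_power_prod_exp_sum sum_expansion_index[symmetric]
    by (simp add: expansion_weight_def sum_distrib_left mult_ac)
  finally show ?thesis .
qed

lemma moment_coeff_exp_sum:
  "moment_coeff k lam r m = (\<Sum>x\<in>expansion_index k r. expansion_weight k lam r x * expansion_rate k x ^ m)"
  unfolding moment_coeff_def laplace_exponent_power_exp_sum
  by (simp add: higher_deriv_exp_sum finite_expansion_index)

lemma moment_coeff_multinomial_form:
  "(\<Sum>i\<in>compositions k r. multinom k r i * (\<Prod>l=1..k. lam l ^ i l) *
      (\<Sum>n\<in>compositions k m. multinom k m n *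
         (\<Prod>l=1..k. (deriv ^^ n l) (\<lambda>s. (exp (real l * s) - 1) ^ i l) 0))) =
   moment_coeff k lam r m"
proof -
  have inner: "(\<Sum>n\<in>compositions k m. multinom k m n *
        (\<Prod>l=1..k. (deriv ^^ n l) (\<lambda>s. (exp (real l * s) - 1) ^ i l) 0)) =
      (\<Sum>q\<in>PiE {1..k} (\<lambda>l. {..i l}).
         (\<Prod>l=1..k. expm1_coeff (i l) (q l)) * expansion_rate k (i, q) ^ m)" for i
  proof -
    have "(\<Sum>n\<in>compositions k m. multinom k m n *
        (\<Prod>l=1..k. (deriv ^^ n l) (\<lambda>s. (exp (real l * s) - 1) ^ i l) 0)) =
      (\<Sum>n\<in>compositions k m. multinom k m n *
        (\<Sum>q\<in>PiE {1..k} (\<lambda>l. {..i l}). \<Prod>l=1..k. expm1_coeff (i l) (q l) * real (l * q l) ^ n l))"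
      by (simp add: higher_deriv_expm1_power_at_0 prod_sum_PiE)
    also have "\<dots> = (\<Sum>q\<in>PiE {1..k} (\<lambda>l. {..i l}). (\<Prod>l=1..k. expm1_coeff (i l) (q l)) *
        (\<Sum>n\<in>compositions k m. multinom k m n * (\<Prod>l=1..k. real (l * q l) ^ n l)))"
      unfolding sum_distrib_left by (subst sum.swap) (simp add: prod.distrib mult_ac)
    also have "\<dots> = (\<Sum>q\<in>PiE {1..k} (\<lambda>l. {..i l}).
        (\<Prod>l=1..k. expm1_coeff (i l) (q l)) * expansion_rate k (i, q) ^ m)"
      using multinomial_theorem[of "\<lambda>l. real (l * _ l)" k m]
      by (intro sum.cong refl) (simp add: expansion_rate_def)
    finally show ?thesis .
  qed
  show ?thesis
    unfolding inner moment_coeff_exp_sum sum_expansion_index[symmetric]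
    by (simp add: expansion_weight_def sum_distrib_left mult_ac)
qed

lemma power_add_minus_power:
  fixes x y :: real
  shows "(x + y) ^ m - x ^ m = (\<Sum>a<m. real (m choose a) * y ^ (m - a) * x ^ a)"
proof -
  have "(x + y) ^ m = (\<Sum>a\<le>m. real (m choose a) * x ^ a * y ^ (m - a))"
    by (rule binomial_ring)
  also have "\<dots> = (\<Sum>a<m. real (m choose a) * y ^ (m - a) * x ^ a) + x ^ m"
    by (simp add: lessThan_Suc_atMost[symmetric] mult_ac)
  finally show ?thesis by simp
qed

definition moment_kernel :: "nat \<Rightarrow> (nat \<Rightarrow> real) \<Rightarrow> nat \<Rightarrow> nat \<Rightarrow> real" where
  "moment_kernel k lam m b = (\<Sum>l=1..k. lam l * real (m choose b) * real l ^ (m - b))"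

lemma moment_kernel_nonneg: "(\<And>l. l \<in> {1..k} \<Longrightarrow> 0 \<le> lam l) \<Longrightarrow> 0 \<le> moment_kernel k lam m b"
  unfolding moment_kernel_def by (intro sum_nonneg) auto

lemma moment_coeff_0: "moment_coeff k lam 0 m = 0 ^ m"
proof -
  have const: "(\<lambda>s. laplace_exponent k lam s ^ 0) = (\<lambda>s. \<Sum>x\<in>{()}. 1 * exp (0 * s))" by simp
  show ?thesis unfolding moment_coeff_def const by (subst higher_deriv_exp_sum) simp_all
qed

lemma laplace_exponent_Suc_power_exp_sum:
  fixes k r :: nat and lam :: "nat \<Rightarrow> real" and s :: real
  defines "Y \<equiv> {1..k} \<times> expansion_index k r"
    and "c \<equiv> \<lambda>y. lam (fst y) * expansion_weight k lam r (snd y)"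
  shows "laplace_exponent k lam s ^ Suc r =
    (\<Sum>y\<in>Y. c y * exp ((real (fst y) + expansion_rate k (snd y)) * s)) -
    (\<Sum>y\<in>Y. c y * exp (expansion_rate k (snd y) * s))"
proof -
  have "laplace_exponent k lam s ^ Suc r = (\<Sum>l=1..k. \<Sum>x\<in>expansion_index k r.
     lam l * expansion_weight k lam r x *
       (exp ((real l + expansion_rate k x) * s) - exp (expansion_rate k x * s)))"
    unfolding power_Suc laplace_exponent_power_exp_sum
    unfolding laplace_exponent_def sum_distrib_right
    by (intro sum.cong refl) (simp add: sum_distrib_left exp_add algebra_simps)
  then show ?thesis
    unfolding Y_def c_def sum.cartesian_product
    by (simp add: case_prod_beta right_diff_distrib sum_subtractf)
qed

lemma moment_coeff_Suc:
  "moment_coeff k lam (Suc r) m = (\<Sum>b<m. moment_kernel k lam m b * moment_coeff k lam r b)"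
proof -
  let ?W = "expansion_weight k lam r" and ?E = "expansion_rate k"
  let ?Y = "{1..k} \<times> expansion_index k r"
  have "moment_coeff k lam (Suc r) m = (\<Sum>y\<in>?Y. lam (fst y) * ?W (snd y) *
      ((?E (snd y) + real (fst y)) ^ m - ?E (snd y) ^ m))"
    unfolding moment_coeff_def laplace_exponent_Suc_power_exp_sum[abs_def]
    by (simp only: higher_deriv_exp_sum_diff finite_expansion_index finite_SigmaI finite_atLeastAtMost)
       (simp add: sum_subtractf right_diff_distrib add.commute mult_ac)
  also have "\<dots> = (\<Sum>y\<in>?Y. \<Sum>b<m. lam (fst y) * ?W (snd y) *
      (real (m choose b) * real (fst y) ^ (m - b) * ?E (snd y) ^ b))"
    by (simp add: power_add_minus_power sum_distrib_left)
  also have "\<dots> = (\<Sum>b<m. \<Sum>l=1..k. \<Sum>x\<in>expansion_index k r.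
      lam l * ?W x * (real (m choose b) * real l ^ (m - b) * ?E x ^ b))"
    by (subst sum.swap) (intro sum.cong refl, simp add: sum.cartesian_product case_prod_beta)
  also have "\<dots> = (\<Sum>b<m. moment_kernel k lam m b * moment_coeff k lam r b)"
    unfolding moment_kernel_def moment_coeff_exp_sum
    by (simp add: sum_distrib_left sum_distrib_right mult_ac)
  finally show ?thesis .
qed

lemma moment_coeff_eq_0: "m < r \<Longrightarrow> moment_coeff k lam r m = 0"
proof (induction r arbitrary: m)
  case 0
  then show ?case by simp
next
  case (Suc r)
  then show ?case by (simp add: moment_coeff_Suc)
qed

lemma moment_coeff_nonneg: "(\<And>l. l \<in> {1..k} \<Longrightarrow> 0 \<le> lam l) \<Longrightarrow> 0 \<le> moment_coeff k lam r m"
proof (induction r arbitrary: m)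
  case 0
  then show ?case by (simp add: moment_coeff_0)
next
  case (Suc r)
  then show ?case
    by (auto simp: moment_coeff_Suc intro!: sum_nonneg mult_nonneg_nonneg moment_kernel_nonneg)
qed

section \<open>Caputo derivatives of fractional powers\<close>

definition caputo_regular :: "real \<Rightarrow> (real \<Rightarrow> real) \<Rightarrow> real \<Rightarrow> bool" where
  "caputo_regular \<nu> f s \<longleftrightarrow> (\<forall>u\<in>{0<..s}. f differentiable (at u)) \<and>
      (\<nu> < 1 \<longrightarrow> (\<lambda>u. deriv f u / (s - u) powr \<nu>) integrable_on {0..s})"

lemma caputo_sum:
  assumes nu: "\<nu> \<le> 1" and fin: "finite I" and s: "0 < s"
    and reg: "\<And>i. i \<in> I \<Longrightarrow> caputo_regular \<nu> (f i) s"
  shows "caputo_regular \<nu> (\<lambda>x. \<Sum>i\<in>I. c i * f i x) s \<and>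
         caputo \<nu> (\<lambda>x. \<Sum>i\<in>I. c i * f i x) s = (\<Sum>i\<in>I. c i * caputo \<nu> (f i) s)"
proof -
  have D: "DERIV (\<lambda>x. \<Sum>i\<in>I. c i * f i x) u :> (\<Sum>i\<in>I. c i * deriv (f i) u)"
    if u: "u \<in> {0<..s}" for u
  proof -
    have "DERIV (f i) u :> deriv (f i) u" if "i \<in> I" for i
      using reg[OF that] u unfolding caputo_regular_def DERIV_deriv_iff_real_differentiable by blast
    then show ?thesis by (auto intro!: derivative_eq_intros simp: mult.commute)
  qed
  then have deriv_sum: "deriv (\<lambda>x. \<Sum>i\<in>I. c i * f i x) u = (\<Sum>i\<in>I. c i * deriv (f i) u)"
    if "u \<in> {0<..s}" for u
    using that by (blast intro: DERIV_imp_deriv)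
  have diff: "\<forall>u\<in>{0<..s}. (\<lambda>x. \<Sum>i\<in>I. c i * f i x) differentiable (at u)"
    using D real_differentiable_def by blast
  show ?thesis
  proof (cases "\<nu> < 1")
    case True
    have "((\<lambda>u. \<Sum>i\<in>I. c i * (deriv (f i) u / (s - u) powr \<nu>)) has_integral
           (\<Sum>i\<in>I. c i * integral {0..s} (\<lambda>u. deriv (f i) u / (s - u) powr \<nu>))) {0..s}"
      using reg True unfolding caputo_regular_def
      by (intro has_integral_sum fin has_integral_mult_right integrable_integral) auto
    then have "((\<lambda>u. deriv (\<lambda>x. \<Sum>i\<in>I. c i * f i x) u / (s - u) powr \<nu>) has_integral
           (\<Sum>i\<in>I. c i * integral {0..s} (\<lambda>u. deriv (f i) u / (s - u) powr \<nu>))) {0<..<s}"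
      unfolding has_integral_Icc_iff_Ioo
      by (rule has_integral_cong[THEN iffD1, rotated]) (simp add: deriv_sum sum_divide_distrib)
    then show ?thesis
      using True diff unfolding caputo_regular_def caputo_def has_integral_Icc_iff_Ioo[symmetric]
      by (auto simp: integral_unique sum_distrib_left mult_ac)
  next
    case False
    with nu s diff deriv_sum[of s] show ?thesis
      unfolding caputo_regular_def caputo_def by (auto simp: mult_ac)
  qed
qed

lemma caputo_lincomb:
  assumes "\<nu> \<le> 1" and "0 < s" and "caputo_regular \<nu> f s" "caputo_regular \<nu> g s"
  shows "caputo_regular \<nu> (\<lambda>x. a * f x + b * g x) s \<and>
         caputo \<nu> (\<lambda>x. a * f x + b * g x) s = a * caputo \<nu> f s + b * caputo \<nu> g s"
  using caputo_sum[of \<nu> "{False, True}" s "\<lambda>i. if i then g else f" "\<lambda>i. if i then b else a"] assms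
  by (simp add: add.commute)

lemma caputo_const: "0 < s \<Longrightarrow> caputo_regular \<nu> (\<lambda>x. c) s \<and> caputo \<nu> (\<lambda>x. c) s = 0"
  by (simp add: caputo_regular_def caputo_def integrable_0)

lemma has_integral_Beta_scaled:
  fixes a b s :: real
  assumes a: "0 < a" and b: "0 < b" and s: "0 < s"
  shows "((\<lambda>u. u powr (a - 1) * (s - u) powr (b - 1)) has_integral (s powr (a + b - 1) * Beta a b)) {0..s}"
proof -
  let ?F = "\<lambda>t::real. t powr (a - 1) * (1 - t) powr (b - 1)"
  have "((\<lambda>x. ?F ((1/s) *\<^sub>R x + 0)) has_integral (1 / \<bar>1/s\<bar> ^ DIM(real)) *\<^sub>R Beta a b)
        ((\<lambda>x. (1 / (1/s)) *\<^sub>R x + - ((1 / (1/s)) *\<^sub>R 0)) ` cbox 0 1)"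
    using has_integral_affinity[of ?F "Beta a b" 0 1 "1/s" 0] has_integral_Beta_real[OF a b] s by simp
  then have "((\<lambda>x. ?F (x / s)) has_integral (s * Beta a b)) {0..s}"
    using s by simp
  then have "((\<lambda>x. s powr (a + b - 2) * ?F (x / s)) has_integral (s powr (a + b - 2) * (s * Beta a b))) {0..s}"
    by (rule has_integral_mult_right)
  moreover have "s powr (a + b - 1) = s powr (a + b - 2) * s"
    using s powr_add[of s "a + b - 2" 1] by simp
  ultimately have "((\<lambda>x. s powr (a + b - 2) * ?F (x / s)) has_integral (s powr (a + b - 1) * Beta a b)) {0<..<s}"
    by (simp add: has_integral_Icc_iff_Ioo mult.assoc)
  then have "((\<lambda>u. u powr (a - 1) * (s - u) powr (b - 1)) has_integral (s powr (a + b - 1) * Beta a b)) {0<..<s}"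
  proof (rule has_integral_cong[THEN iffD1, rotated])
    fix x assume x: "x \<in> {0<..<s}"
    have "1 - x / s = (s - x) / s" using s by (simp add: field_simps)
    then have "?F (x / s) = x powr (a - 1) * (s - x) powr (b - 1) / (s powr (a - 1) * s powr (b - 1))"
      by (simp add: powr_divide)
    also have "s powr (a - 1) * s powr (b - 1) = s powr (a + b - 2)"
      by (simp add: powr_add[symmetric])
    finally show "s powr (a + b - 2) * ?F (x / s) = x powr (a - 1) * (s - x) powr (b - 1)"
      using s by simp
  qed
  then show ?thesis by (simp add: has_integral_Icc_iff_Ioo)
qed

lemma caputo_powr:
  assumes nu: "0 < \<nu>" "\<nu> \<le> 1" and al: "0 < \<alpha>" and s: "0 < s"
  shows "caputo_regular \<nu> (\<lambda>u. u powr \<alpha>) s \<and>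
     caputo \<nu> (\<lambda>u. u powr \<alpha>) s = Gamma (\<alpha> + 1) / Gamma (\<alpha> + 1 - \<nu>) * s powr (\<alpha> - \<nu>)"
proof -
  have D: "deriv (\<lambda>u. u powr \<alpha>) u = \<alpha> * u powr (\<alpha> - 1)" if "0 < u" for u
    by (rule DERIV_imp_deriv) (rule has_real_derivative_powr[OF that])
  have diff: "\<forall>u\<in>{0<..s}. (\<lambda>u. u powr \<alpha>) differentiable (at u)"
    using has_real_derivative_powr real_differentiable_def by fastforce
  have Gamma_plus1: "Gamma (\<alpha> + 1) = \<alpha> * Gamma \<alpha>"
    using al by (intro Gamma_plus1) (auto simp: nonpos_Ints_def)
  show ?thesis
  proof (cases "\<nu> < 1")
    case True
    have "((\<lambda>u. \<alpha> * (u powr (\<alpha> - 1) * (s - u) powr ((1 - \<nu>) - 1))) has_integral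
        (\<alpha> * (s powr (\<alpha> - \<nu>) * Beta \<alpha> (1 - \<nu>)))) {0<..<s}"
      unfolding has_integral_Icc_iff_Ioo[symmetric]
      using has_integral_mult_right[OF has_integral_Beta_scaled[OF al _ s, of "1 - \<nu>"], of \<alpha>] True
      by simp
    then have "((\<lambda>u. deriv (\<lambda>u. u powr \<alpha>) u / (s - u) powr \<nu>) has_integral
        (\<alpha> * (s powr (\<alpha> - \<nu>) * Beta \<alpha> (1 - \<nu>)))) {0<..<s}"
      by (rule has_integral_cong[THEN iffD1, rotated]) (simp_all add: D powr_minus divide_inverse)
    then have I: "((\<lambda>u. deriv (\<lambda>u. u powr \<alpha>) u / (s - u) powr \<nu>) has_integral
        (\<alpha> * (s powr (\<alpha> - \<nu>) * Beta \<alpha> (1 - \<nu>)))) {0..s}"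
      by (simp add: has_integral_Icc_iff_Ioo)
    have "Gamma (1 - \<nu>) \<noteq> 0" using True Gamma_real_pos[of "1 - \<nu>"] by linarith
    moreover have "Gamma (1 + \<alpha>) = \<alpha> * Gamma \<alpha>" using Gamma_plus1 by (simp add: add.commute)
    ultimately have "caputo \<nu> (\<lambda>u. u powr \<alpha>) s = Gamma (\<alpha> + 1) / Gamma (\<alpha> + 1 - \<nu>) * s powr (\<alpha> - \<nu>)"
      using True I unfolding caputo_def
      by (simp add: integral_unique Beta_def Gamma_plus1 field_simps)
    with I diff True show ?thesis unfolding caputo_regular_def by blast
  next
    case False
    then have "\<nu> = 1" using nu by simp
    moreover have "Gamma \<alpha> > 0" using al by simp
    ultimately show ?thesis using diff s unfolding caputo_regular_def caputo_def
      by (simp add: D Gamma_plus1)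
  qed
qed

lemma Gamma_frac_pos: "0 \<le> \<nu> \<Longrightarrow> 0 < Gamma (real r * \<nu> + 1)"
  by (intro Gamma_real_pos) (simp add: add_nonneg_pos)

definition frac_power :: "real \<Rightarrow> nat \<Rightarrow> real \<Rightarrow> real" where
  "frac_power \<nu> r s = (s powr \<nu>) ^ r / Gamma (real r * \<nu> + 1)"

lemma caputo_frac_power:
  assumes nu: "0 < \<nu>" "\<nu> \<le> 1" and s: "0 < s"
  shows "caputo_regular \<nu> (frac_power \<nu> r) s \<and>
     caputo \<nu> (frac_power \<nu> r) s = (if r = 0 then 0 else frac_power \<nu> (r - 1) s)"
proof (cases r)
  case 0
  then have "frac_power \<nu> r = (\<lambda>u. 1)" by (simp add: frac_power_def fun_eq_iff)
  then show ?thesis using caputo_const[OF s] 0 by simp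
next
  case (Suc r')
  have a: "0 < real r * \<nu>" using nu Suc by simp
  let ?g = "\<lambda>u. u powr (real r * \<nu>)"
  have eq: "frac_power \<nu> r = (\<lambda>u. (1 / Gamma (real r * \<nu> + 1)) * ?g u + 0 * ?g u)"
  proof
    fix u :: real
    have "r \<noteq> 0" using Suc by simp
    then have "(u powr \<nu>) ^ r = u powr (real r * \<nu>)"
      by (cases "u = 0") (simp_all add: powr_power)
    then show "frac_power \<nu> r u = (1 / Gamma (real r * \<nu> + 1)) * ?g u + 0 * ?g u"
      by (simp add: frac_power_def)
  qed
  have g: "caputo_regular \<nu> ?g s \<and>
      caputo \<nu> ?g s = Gamma (real r * \<nu> + 1) / Gamma (real r * \<nu> + 1 - \<nu>) * s powr (real r * \<nu> - \<nu>)"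
    using caputo_powr[OF nu a s] .
  have G: "Gamma (real r * \<nu> + 1) \<noteq> 0"
    using Gamma_frac_pos[of \<nu> r] nu(1) by (metis less_eq_real_def less_irrefl)
  have shift: "Gamma (real r * \<nu> + 1 - \<nu>) = Gamma (real (r - 1) * \<nu> + 1)"
    using Suc by (simp add: algebra_simps)
  have pow: "s powr (real r * \<nu> - \<nu>) = (s powr \<nu>) ^ (r - 1)"
    using Suc s by (simp add: powr_power algebra_simps)
  have "caputo_regular \<nu> (frac_power \<nu> r) s \<and>
      caputo \<nu> (frac_power \<nu> r) s = 1 / Gamma (real r * \<nu> + 1) * caputo \<nu> ?g s"
    unfolding eq using caputo_lincomb[OF nu(2) s, of ?g ?g "1 / Gamma (real r * \<nu> + 1)" 0] g by simp
  then show ?thesis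
    using g G Suc unfolding shift pow by (simp add: frac_power_def)
qed

lemma caputo_frac_power_sum:
  assumes "0 < \<nu>" "\<nu> \<le> 1" and s: "0 < s"
  shows "caputo_regular \<nu> (\<lambda>x. \<Sum>r\<le>N. a r * frac_power \<nu> r x) s \<and>
     caputo \<nu> (\<lambda>x. \<Sum>r\<le>N. a r * frac_power \<nu> r x) s = (\<Sum>r<N. a (Suc r) * frac_power \<nu> r s)"
proof -
  have "caputo_regular \<nu> (\<lambda>x. \<Sum>r\<le>N. a r * frac_power \<nu> r x) s \<and>
     caputo \<nu> (\<lambda>x. \<Sum>r\<le>N. a r * frac_power \<nu> r x) s = (\<Sum>r\<le>N. a r * caputo \<nu> (frac_power \<nu> r) s)"
    using assms caputo_frac_power by (intro caputo_sum) auto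
  moreover have "(\<Sum>r\<le>N. a r * caputo \<nu> (frac_power \<nu> r) s) = (\<Sum>r<N. a (Suc r) * frac_power \<nu> r s)"
  proof (cases N)
    case 0
    then show ?thesis using caputo_frac_power[OF assms, of 0] by simp
  next
    case (Suc N')
    have "(\<Sum>r\<le>N. a r * caputo \<nu> (frac_power \<nu> r) s) =
        (\<Sum>r\<le>N. a r * (if r = 0 then 0 else frac_power \<nu> (r - 1) s))"
      using caputo_frac_power[OF assms] by simp
    also have "\<dots> = (\<Sum>r\<le>N'. a (Suc r) * frac_power \<nu> r s)"
      unfolding Suc sum.atMost_Suc_shift by simp
    finally show ?thesis using Suc lessThan_Suc_atMost by simp
  qed
  ultimately show ?thesis by simp
qed

lemma frac_power_nonneg: "0 \<le> \<nu> \<Longrightarrow> 0 \<le> frac_power \<nu> r s"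
  unfolding frac_power_def using Gamma_frac_pos[of \<nu> r] by (simp add: less_imp_le)

lemma frac_power_mono: "0 \<le> \<nu> \<Longrightarrow> 0 \<le> s \<Longrightarrow> s \<le> T \<Longrightarrow> frac_power \<nu> r s \<le> frac_power \<nu> r T"
  unfolding frac_power_def using Gamma_frac_pos[of \<nu> r]
  by (intro divide_right_mono power_mono powr_mono2) auto

lemma continuous_on_frac_power: "0 < \<nu> \<Longrightarrow> continuous_on {0..} (frac_power \<nu> r)"
  unfolding frac_power_def[abs_def] using Gamma_frac_pos[of \<nu> r]
  by (intro continuous_intros continuous_on_powr') auto

lemma frac_power_at_0: "0 < \<nu> \<Longrightarrow> frac_power \<nu> r 0 = 0 ^ r"
  unfolding frac_power_def by (cases r) simp_all

section \<open>A comparison principle for the Caputo derivative\<close>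

text \<open>Integration by parts against the singular kernel, on \<open>[0, a]\<close> with \<open>a < s0\<close> so that the
  kernel stays bounded: \<open>F u = (g u - M) * (s0 - u) powr -\<nu>\<close> has derivative at most the
  integrand because \<open>g \<le> M\<close>.\<close>

lemma integral_caputo_kernel_ge:
  fixes g :: "real \<Rightarrow> real"
  assumes a: "0 < a" "a < s0" and nu: "0 \<le> \<nu>"
    and cont: "continuous_on {0..a} g"
    and deriv: "\<And>u. u \<in> {0<..<a} \<Longrightarrow> DERIV g u :> deriv g u"
    and le: "\<And>u. u \<in> {0..a} \<Longrightarrow> g u \<le> M"
    and int: "(\<lambda>u. deriv g u / (s0 - u) powr \<nu>) integrable_on {0..a}"
  shows "(g a - M) * (s0 - a) powr (-\<nu>) - (g 0 - M) * s0 powr (-\<nu>) \<le>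
         integral {0..a} (\<lambda>u. deriv g u / (s0 - u) powr \<nu>)"
proof -
  define F where "F = (\<lambda>u. (g u - M) * (s0 - u) powr (-\<nu>))"
  define F' where "F' = (\<lambda>u. deriv g u * (s0 - u) powr (-\<nu>) + (g u - M) * (\<nu> * (s0 - u) powr (-\<nu> - 1)))"
  have "continuous_on {0..a} F"
    unfolding F_def by (intro continuous_intros cont) (use a in auto)
  moreover have "(F has_vector_derivative F' u) (at u)" if u: "u \<in> {0<..<a}" for u
  proof -
    have "DERIV F u :> F' u"
      unfolding F_def F'_def using u a deriv[OF u]
      by (auto intro!: derivative_eq_intros simp: algebra_simps)
    then show ?thesis by (simp add: has_real_derivative_iff_has_vector_derivative)
  qed
  ultimately have "(F' has_integral (F a - F 0)) {0<..<a}"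
    using a unfolding has_integral_Icc_iff_Ioo[symmetric]
    by (intro fundamental_theorem_of_calculus_interior) auto
  then have "F a - F 0 \<le> integral {0..a} (\<lambda>u. deriv g u / (s0 - u) powr \<nu>)"
  proof (rule has_integral_le)
    show "((\<lambda>u. deriv g u / (s0 - u) powr \<nu>) has_integral
        integral {0..a} (\<lambda>u. deriv g u / (s0 - u) powr \<nu>)) {0<..<a}"
      using int by (simp add: has_integral_Icc_iff_Ioo[symmetric] integrable_integral)
    fix u assume u: "u \<in> {0<..<a}"
    have "(g u - M) * (\<nu> * (s0 - u) powr (-\<nu> - 1)) \<le> 0"
      using le[of u] u a nu by (intro mult_nonpos_nonneg) auto
    then show "F' u \<le> deriv g u / (s0 - u) powr \<nu>"
      unfolding F'_def by (simp add: powr_minus divide_inverse)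
  qed
  then show ?thesis unfolding F_def by simp
qed

lemma tendsto_diff_times_powr_at_left:
  fixes g :: "real \<Rightarrow> real"
  assumes "g differentiable (at s0)" and "\<nu> < 1"
  shows "((\<lambda>a. (g a - g s0) * (s0 - a) powr (-\<nu>)) \<longlongrightarrow> 0) (at_left s0)"
proof -
  have quot: "((\<lambda>a. (g a - g s0) / (a - s0)) \<longlongrightarrow> deriv g s0) (at_left s0)"
    using assms(1) unfolding DERIV_deriv_iff_real_differentiable[symmetric] has_field_derivative_iff
    by (auto intro: tendsto_mono[OF at_le])
  have "((\<lambda>a. (s0 - a) powr (1 - \<nu>)) \<longlongrightarrow> 0) (at_left s0)"
    by (rule tendsto_zero_powrI) (auto intro!: tendsto_eq_intros eventually_at_leftI[of "s0 - 1"] simp: assms)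
  from tendsto_mult[OF tendsto_minus[OF quot] this]
  have "((\<lambda>a. - ((g a - g s0) / (a - s0)) * (s0 - a) powr (1 - \<nu>)) \<longlongrightarrow> 0) (at_left s0)"
    by simp
  moreover have "eventually (\<lambda>a. - ((g a - g s0) / (a - s0)) * (s0 - a) powr (1 - \<nu>) =
      (g a - g s0) * (s0 - a) powr (-\<nu>)) (at_left s0)"
  proof (rule eventually_at_leftI[of "s0 - 1"])
    fix a assume "a \<in> {s0 - 1<..<s0}"
    then have p: "0 < s0 - a" by simp
    have pow: "(s0 - a) powr (1 - \<nu>) = (s0 - a) * (s0 - a) powr (-\<nu>)"
      using p powr_add[of "s0 - a" 1 "-\<nu>"] by simp
    show "- ((g a - g s0) / (a - s0)) * (s0 - a) powr (1 - \<nu>) = (g a - g s0) * (s0 - a) powr (-\<nu>)"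
      unfolding pow using p by (simp add: field_simps)
  qed simp
  ultimately show ?thesis by (simp add: tendsto_cong)
qed

lemma caputo_pos_at_max:
  fixes g :: "real \<Rightarrow> real"
  assumes nu: "0 < \<nu>" "\<nu> < 1" and s0: "0 < s0"
    and cont: "continuous_on {0..s0} g" and reg: "caputo_regular \<nu> g s0"
    and less: "g 0 < g s0" and max: "\<And>u. u \<in> {0..s0} \<Longrightarrow> g u \<le> g s0"
  shows "0 < caputo \<nu> g s0"
proof -
  define f where "f = (\<lambda>u. deriv g u / (s0 - u) powr \<nu>)"
  define lo where "lo = (\<lambda>a. (g a - g s0) * (s0 - a) powr (-\<nu>) - (g 0 - g s0) * s0 powr (-\<nu>))"
  have int: "f integrable_on {0..s0}" using reg nu unfolding caputo_regular_def f_def by auto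
  have deriv: "DERIV g u :> deriv g u" if "u \<in> {0<..s0}" for u
    using reg that unfolding caputo_regular_def DERIV_deriv_iff_real_differentiable by blast
  have "lo a \<le> integral {0..a} f" if a: "a \<in> {0<..<s0}" for a
    unfolding lo_def f_def
  proof (rule integral_caputo_kernel_ge)
    show "continuous_on {0..a} g" using a by (intro continuous_on_subset[OF cont]) auto
    show "(\<lambda>u. deriv g u / (s0 - u) powr \<nu>) integrable_on {0..a}"
      using integrable_subinterval_real[OF int[unfolded f_def]] a by auto
  qed (use a nu deriv max in auto)
  then have le: "eventually (\<lambda>a. lo a \<le> integral {0..a} f) (at_left s0)"
    by (intro eventually_at_leftI[of 0]) (use s0 in auto)
  have lim_int: "((\<lambda>a. integral {0..a} f) \<longlongrightarrow> integral {0..s0} f) (at_left s0)"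
    using indefinite_integral_continuous_1[OF int] s0 at_within_Icc_at_left[OF s0]
    unfolding continuous_on_def by (metis atLeastAtMost_iff order.refl less_imp_le)
  have lim_lo: "(lo \<longlongrightarrow> 0 - (g 0 - g s0) * s0 powr (-\<nu>)) (at_left s0)"
    unfolding lo_def
    by (intro tendsto_diff tendsto_const tendsto_diff_times_powr_at_left)
       (use deriv s0 nu in \<open>auto simp: real_differentiable_def\<close>)
  have "(g s0 - g 0) * s0 powr (-\<nu>) \<le> integral {0..s0} f"
    using tendsto_le[OF trivial_limit_at_left_real lim_int lim_lo le] by (simp add: algebra_simps)
  moreover have "0 < (g s0 - g 0) * s0 powr (-\<nu>)" using less s0 by simp
  moreover have "0 < Gamma (1 - \<nu>)" using nu by simp
  ultimately show ?thesis using nu unfolding caputo_def f_def by simp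
qed

lemma caputo_nonpos_imp_nonpos:
  fixes g :: "real \<Rightarrow> real"
  assumes nu: "0 < \<nu>" "\<nu> \<le> 1"
    and cont: "continuous_on {0..T} g" and g0: "g 0 \<le> 0"
    and reg: "\<And>s. s \<in> {0<..T} \<Longrightarrow> caputo_regular \<nu> g s"
    and nonpos: "\<And>s. s \<in> {0<..T} \<Longrightarrow> caputo \<nu> g s \<le> 0"
    and s: "s \<in> {0..T}"
  shows "g s \<le> 0"
proof (cases "\<nu> < 1")
  case False
  then have "\<nu> = 1" using nu by simp
  have "g s \<le> g 0"
  proof (rule DERIV_nonpos_imp_decreasing_open[of 0 s g])
    show "continuous_on {0..s} g" using s by (intro continuous_on_subset[OF cont]) auto
    fix x assume "0 < x" "x < s"
    then have "DERIV g x :> deriv g x" "deriv g x \<le> 0"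
      using reg[of x] nonpos[of x] s \<open>\<nu> = 1\<close>
      by (auto simp: caputo_regular_def caputo_def DERIV_deriv_iff_real_differentiable)
    then show "\<exists>y. DERIV g x :> y \<and> y \<le> 0" by blast
  qed (use s in auto)
  then show ?thesis using g0 by simp
next
  case True
  show ?thesis
  proof (rule ccontr)
    assume "\<not> g s \<le> 0"
    obtain s0 where s0: "s0 \<in> {0..T}" and max: "\<And>y. y \<in> {0..T} \<Longrightarrow> g y \<le> g s0"
      using continuous_attains_sup[OF compact_Icc _ cont] s by auto
    have less: "g 0 < g s0" using max[OF s] \<open>\<not> g s \<le> 0\<close> g0 by simp
    then have "0 < s0" using s0 by (cases "s0 = 0") auto
    have "0 < caputo \<nu> g s0"
    proof (rule caputo_pos_at_max[OF nu(1) True \<open>0 < s0\<close>])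
      show "continuous_on {0..s0} g" using s0 by (intro continuous_on_subset[OF cont]) auto
      show "caputo_regular \<nu> g s0" using reg s0 \<open>0 < s0\<close> by auto
    qed (use less max s0 in auto)
    then show False using nonpos[of s0] s0 \<open>0 < s0\<close> by auto
  qed
qed

lemma caputo_le_imp_le_frac_power:
  fixes h :: "real \<Rightarrow> real"
  assumes nu: "0 < \<nu>" "\<nu> \<le> 1"
    and cont: "continuous_on {0..T} h" and h0: "h 0 \<le> 0"
    and reg: "\<And>x. x \<in> {0<..T} \<Longrightarrow> caputo_regular \<nu> h x"
    and le: "\<And>x. x \<in> {0<..T} \<Longrightarrow> caputo \<nu> h x \<le> c"
    and s: "s \<in> {0..T}"
  shows "h s \<le> c * frac_power \<nu> 1 s"
proof -
  define g where "g = (\<lambda>x. 1 * h x + (- c) * frac_power \<nu> 1 x)"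
  have caputo_g: "caputo_regular \<nu> g x \<and> caputo \<nu> g x = caputo \<nu> h x - c" if "x \<in> {0<..T}" for x
    unfolding g_def using that caputo_lincomb[OF nu(2), of x h "frac_power \<nu> 1" 1 "- c"] reg[OF that]
      caputo_frac_power[OF nu, of x 1] by (simp add: frac_power_def)
  have "g s \<le> 0"
  proof (rule caputo_nonpos_imp_nonpos[OF nu, of T g s])
    show "continuous_on {0..T} g" unfolding g_def
      by (intro continuous_intros cont continuous_on_subset[OF continuous_on_frac_power[OF nu(1)]]) auto
    show "g 0 \<le> 0" unfolding g_def using nu h0 by (simp add: frac_power_at_0)
  qed (use caputo_g le s in auto)
  then show ?thesis unfolding g_def by simp
qed

section \<open>Moments of the counting process\<close>

lemma sum_atMost_shift_if:
  fixes h :: "nat \<Rightarrow> nat \<Rightarrow> real"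
  shows "(\<Sum>j\<le>J. if l \<le> j then h j (j - l) else 0) = (\<Sum>i\<le>J. if i + l \<le> J then h (i + l) i else 0)"
proof -
  have "(\<Sum>j\<le>J. if l \<le> j then h j (j - l) else 0) = (\<Sum>j\<in>{j\<in>{..J}. l \<le> j}. h j (j - l))"
    by (rule sum.inter_filter[symmetric]) simp
  also have "\<dots> = (\<Sum>i\<in>{i\<in>{..J}. i + l \<le> J}. h (i + l) i)"
    by (rule sum.reindex_bij_witness[where i="\<lambda>i. i + l" and j="\<lambda>j. j - l"]) auto
  also have "\<dots> = (\<Sum>i\<le>J. if i + l \<le> J then h (i + l) i else 0)"
    by (rule sum.inter_filter) simp
  finally show ?thesis .
qed

locale fractional_counting_system =
  fixes \<nu> :: real and k :: nat and lam :: "nat \<Rightarrow> real" and p :: "nat \<Rightarrow> real \<Rightarrow> real"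
  assumes nu: "0 < \<nu>" "\<nu> \<le> 1"
    and lam_nonneg: "\<And>l. l \<in> {1..k} \<Longrightarrow> 0 \<le> lam l"
    and prob_nonneg: "\<And>j s. 0 \<le> s \<Longrightarrow> 0 \<le> p j s"
    and cont: "\<And>j. continuous_on {0..} (p j)"
    and diff: "\<And>j s. 0 < s \<Longrightarrow> p j differentiable (at s)"
    and integr: "\<And>j s. \<nu> < 1 \<Longrightarrow> 0 < s \<Longrightarrow>
                   (\<lambda>u. deriv (p j) u / (s - u) powr \<nu>) integrable_on {0..s}"
    and eq0: "\<And>s. 0 < s \<Longrightarrow> caputo \<nu> (p 0) s = - (\<Sum>l=1..k. lam l) * p 0 s"
    and eq_low: "\<And>j s. 1 \<le> j \<Longrightarrow> j \<le> k - 1 \<Longrightarrow> 0 < s \<Longrightarrow>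
                   caputo \<nu> (p j) s = (\<Sum>r=1..j. lam r * p (j - r) s) - (\<Sum>l=1..k. lam l) * p j s"
    and eq_high: "\<And>j s. k \<le> j \<Longrightarrow> 0 < s \<Longrightarrow>
                   caputo \<nu> (p j) s = (\<Sum>r=1..k. lam r * p (j - r) s) - (\<Sum>l=1..k. lam l) * p j s"
    and init0: "p 0 0 = 1"
    and initj: "\<And>j. 1 \<le> j \<Longrightarrow> p j 0 = 0"
begin

definition total_rate :: real where
  "total_rate = (\<Sum>l=1..k. lam l)"

definition truncated_moment :: "nat \<Rightarrow> nat \<Rightarrow> real \<Rightarrow> real" where
  "truncated_moment J m s = (\<Sum>j\<le>J. real j ^ m * p j s)"

lemma total_rate_nonneg: "0 \<le> total_rate"
  unfolding total_rate_def using lam_nonneg by (intro sum_nonneg) auto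

lemma caputo_p_eq:
  assumes s: "0 < s"
  shows "caputo \<nu> (p j) s = (\<Sum>l=1..k. lam l * (if l \<le> j then p (j - l) s else 0)) - total_rate * p j s"
proof -
  consider "j = 0" | "1 \<le> j" "j \<le> k - 1" | "k \<le> j" by linarith
  then show ?thesis
  proof cases
    case 1
    then show ?thesis using eq0[OF s] by (simp add: total_rate_def)
  next
    case 2
    have "(\<Sum>l=1..k. lam l * (if l \<le> j then p (j - l) s else 0)) =
        (\<Sum>l\<in>{l\<in>{1..k}. l \<le> j}. lam l * p (j - l) s)"
      by (subst sum.inter_filter) (auto intro: sum.cong)
    also have "{l\<in>{1..k}. l \<le> j} = {1..j}" using 2 by auto
    finally show ?thesis using eq_low[OF 2 s] by (simp add: total_rate_def)
  next
    case 3
    then have "(\<Sum>l=1..k. lam l * (if l \<le> j then p (j - l) s else 0)) = (\<Sum>l=1..k. lam l * p (j - l) s)"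
      by (intro sum.cong) auto
    then show ?thesis using eq_high[OF 3 s] by (simp add: total_rate_def)
  qed
qed

text \<open>Only the jumps from level \<open>i\<close> to \<open>i + l \<le> J\<close> are seen by the truncated moment.\<close>

lemma caputo_truncated_moment:
  assumes s: "0 < s"
  shows "caputo_regular \<nu> (truncated_moment J m) s \<and>
    caputo \<nu> (truncated_moment J m) s = (\<Sum>l=1..k. lam l *
      ((\<Sum>i\<le>J. if i + l \<le> J then real (i + l) ^ m * p i s else 0) - truncated_moment J m s))"
proof -
  have "caputo_regular \<nu> (\<lambda>x. \<Sum>j\<le>J. real j ^ m * p j x) s \<and>
      caputo \<nu> (\<lambda>x. \<Sum>j\<le>J. real j ^ m * p j x) s = (\<Sum>j\<le>J. real j ^ m * caputo \<nu> (p j) s)"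
    using nu s diff integr by (intro caputo_sum) (auto simp: caputo_regular_def)
  moreover have "(\<Sum>j\<le>J. real j ^ m * caputo \<nu> (p j) s) =
      (\<Sum>l=1..k. lam l * (\<Sum>j\<le>J. if l \<le> j then real j ^ m * p (j - l) s else 0)) -
      total_rate * truncated_moment J m s"
    unfolding caputo_p_eq[OF s] truncated_moment_def
    by (simp add: right_diff_distrib sum_subtractf sum_distrib_left sum_distrib_right if_distrib mult_ac)
       (subst sum.swap, simp add: sum_distrib_left mult_ac if_distrib cong: if_cong)
  ultimately show ?thesis
    unfolding truncated_moment_def[abs_def] sum_atMost_shift_if[where h="\<lambda>j i. real j ^ m * p i s"]
    by (simp add: total_rate_def right_diff_distrib sum_subtractf sum_distrib_right)
qed

lemma sum_jump_increments:
  "(\<Sum>l=1..k. lam l * (\<Sum>i\<le>J. (real (i + l) ^ m - real i ^ m) * p i s)) =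
   (\<Sum>a<m. moment_kernel k lam m a * truncated_moment J a s)"
proof -
  have "(\<Sum>l=1..k. lam l * (\<Sum>i\<le>J. (real (i + l) ^ m - real i ^ m) * p i s)) =
      (\<Sum>l=1..k. \<Sum>a<m. \<Sum>i\<le>J. lam l * (real (m choose a) * real l ^ (m - a) * real i ^ a) * p i s)"
    unfolding of_nat_add power_add_minus_power
    by (simp add: sum_distrib_left sum_distrib_right mult_ac) (intro sum.cong refl sum.swap)
  also have "\<dots> = (\<Sum>a<m. moment_kernel k lam m a * truncated_moment J a s)"
    unfolding moment_kernel_def truncated_moment_def
    by (subst sum.swap) (simp add: sum_distrib_left sum_distrib_right mult_ac)
  finally show ?thesis .
qed

lemma caputo_truncated_moment_le:
  assumes s: "0 < s"
  shows "caputo \<nu> (truncated_moment J m) s \<le> (\<Sum>a<m. moment_kernel k lam m a * truncated_moment J a s)"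
  unfolding caputo_truncated_moment[OF s, THEN conjunct2] sum_jump_increments[symmetric]
proof (intro sum_mono mult_left_mono)
  fix l assume l: "l \<in> {1..k}"
  show "0 \<le> lam l" using lam_nonneg[OF l] .
  have "(\<Sum>i\<le>J. if i + l \<le> J then real (i + l) ^ m * p i s else 0) \<le> (\<Sum>i\<le>J. real (i + l) ^ m * p i s)"
    using prob_nonneg[of s] s by (intro sum_mono) auto
  then show "(\<Sum>i\<le>J. if i + l \<le> J then real (i + l) ^ m * p i s else 0) - truncated_moment J m s \<le>
      (\<Sum>i\<le>J. (real (i + l) ^ m - real i ^ m) * p i s)"
    unfolding truncated_moment_def by (simp add: left_diff_distrib sum_subtractf)
qed

definition boundary_term :: "nat \<Rightarrow> nat \<Rightarrow> real \<Rightarrow> real" where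
  "boundary_term J m s = (\<Sum>i\<le>J. if J < i + k then real (i + k) ^ m * p i s else 0)"

lemma caputo_truncated_moment_ge:
  assumes s: "0 < s"
  shows "(\<Sum>a<m. moment_kernel k lam m a * truncated_moment J a s) - total_rate * boundary_term J m s \<le>
    caputo \<nu> (truncated_moment J m) s"
  unfolding caputo_truncated_moment[OF s, THEN conjunct2] sum_jump_increments[symmetric]
    total_rate_def sum_distrib_right sum_subtractf[symmetric] right_diff_distrib[symmetric]
proof (intro sum_mono mult_left_mono)
  fix l assume l: "l \<in> {1..k}"
  show "0 \<le> lam l" using lam_nonneg[OF l] .
  have "(\<Sum>i\<le>J. real (i + l) ^ m * p i s) - (\<Sum>i\<le>J. if i + l \<le> J then real (i + l) ^ m * p i s else 0)
      = (\<Sum>i\<le>J. if J < i + l then real (i + l) ^ m * p i s else 0)"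
    by (simp add: sum_subtractf[symmetric]) (intro sum.cong, auto)
  also have "\<dots> \<le> boundary_term J m s"
    unfolding boundary_term_def
  proof (intro sum_mono)
    fix i
    have "real (i + l) ^ m * p i s \<le> real (i + k) ^ m * p i s"
      using l prob_nonneg[of s i] s by (intro mult_right_mono power_mono) auto
    then show "(if J < i + l then real (i + l) ^ m * p i s else 0) \<le>
        (if J < i + k then real (i + k) ^ m * p i s else 0)"
      using l prob_nonneg[of s i] s by auto
  qed
  finally show "(\<Sum>i\<le>J. (real (i + l) ^ m - real i ^ m) * p i s) - boundary_term J m s \<le>
      (\<Sum>i\<le>J. if i + l \<le> J then real (i + l) ^ m * p i s else 0) - truncated_moment J m s"
    unfolding truncated_moment_def by (simp add: left_diff_distrib sum_subtractf)
qed

text \<open>Only levels \<open>i > J - k\<close> contribute to the boundary term, and there \<open>i + k \<le> (k + 1) i\<close> and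
  \<open>1 \<le> i / (J + 1 - k)\<close>: the boundary term is small against the next moment.\<close>

lemma boundary_term_le:
  assumes J: "k \<le> J" and s: "0 \<le> s"
  shows "boundary_term J m s \<le> real (k + 1) ^ m / (real J + 1 - real k) * truncated_moment J (Suc m) s"
proof -
  have D: "0 < real J + 1 - real k" using J by simp
  have "boundary_term J m s \<le> (\<Sum>i\<le>J. real (k + 1) ^ m / (real J + 1 - real k) * (real i ^ Suc m * p i s))"
    unfolding boundary_term_def
  proof (intro sum_mono)
    fix i assume i: "i \<in> {..J}"
    show "(if J < i + k then real (i + k) ^ m * p i s else 0) \<le>
        real (k + 1) ^ m / (real J + 1 - real k) * (real i ^ Suc m * p i s)"
    proof (cases "J < i + k")
      case True
      then have i1: "1 \<le> i" and iJ: "real J + 1 - real k \<le> real i" using J by auto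
      have "real k * 1 \<le> real k * real i" using i1 by (intro mult_left_mono) auto
      then have "real (i + k) ^ m \<le> (real (k + 1) * real i) ^ m"
        by (intro power_mono) (auto simp: algebra_simps)
      also have "\<dots> \<le> real (k + 1) ^ m * (real i ^ Suc m / (real J + 1 - real k))"
        unfolding power_mult_distrib
      proof (intro mult_left_mono)
        have "real i ^ m * (real J + 1 - real k) \<le> real i ^ m * real i"
          using iJ by (intro mult_left_mono) auto
        then show "real i ^ m \<le> real i ^ Suc m / (real J + 1 - real k)"
          using D by (simp add: field_simps)
      qed simp
      finally have "real (i + k) ^ m * p i s \<le>
          real (k + 1) ^ m * (real i ^ Suc m / (real J + 1 - real k)) * p i s"
        using prob_nonneg[OF s, of i] by (intro mult_right_mono) auto
      then show ?thesis using True by (simp add: field_simps)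
    next
      case False
      then show ?thesis using D prob_nonneg[OF s, of i] by simp
    qed
  qed
  also have "\<dots> = real (k + 1) ^ m / (real J + 1 - real k) * truncated_moment J (Suc m) s"
    unfolding truncated_moment_def by (simp add: sum_distrib_left)
  finally show ?thesis .
qed

definition moment_formula :: "nat \<Rightarrow> real \<Rightarrow> real" where
  "moment_formula m s = (\<Sum>r\<le>m. moment_coeff k lam r m * frac_power \<nu> r s)"

lemma caputo_moment_formula:
  assumes s: "0 < s"
  shows "caputo_regular \<nu> (moment_formula m) s \<and>
    caputo \<nu> (moment_formula m) s = (\<Sum>b<m. moment_kernel k lam m b * moment_formula b s)"
proof -
  have "(\<Sum>r<m. moment_coeff k lam (Suc r) m * frac_power \<nu> r s) =
      (\<Sum>b<m. moment_kernel k lam m b * (\<Sum>r<m. moment_coeff k lam r b * frac_power \<nu> r s))"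
    unfolding moment_coeff_Suc sum_distrib_left sum_distrib_right
    by (subst sum.swap) (simp add: mult_ac)
  also have "\<dots> = (\<Sum>b<m. moment_kernel k lam m b * moment_formula b s)"
    unfolding moment_formula_def
    by (intro sum.cong refl arg_cong[where f="(*) _"] sum.mono_neutral_left[symmetric])
       (auto simp: moment_coeff_eq_0)
  finally show ?thesis
    using caputo_frac_power_sum[OF nu s, where N=m and a="\<lambda>r. moment_coeff k lam r m"]
    unfolding moment_formula_def[abs_def] by simp
qed

lemma moment_formula_at_0: "moment_formula m 0 = 0 ^ m"
  unfolding moment_formula_def using nu
  by (simp add: frac_power_at_0 moment_coeff_0 sum.atMost_shift)

lemma truncated_moment_at_0: "truncated_moment J m 0 = 0 ^ m"
  unfolding truncated_moment_def using initj init0 by (simp add: sum.atMost_shift)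

lemma continuous_on_moment_formula: "continuous_on {0..} (moment_formula m)"
  unfolding moment_formula_def[abs_def] using nu
  by (intro continuous_intros continuous_on_frac_power) auto

lemma continuous_on_truncated_moment: "continuous_on {0..} (truncated_moment J m)"
  unfolding truncated_moment_def[abs_def] by (intro continuous_intros cont)

lemma moment_formula_nonneg: "0 \<le> s \<Longrightarrow> 0 \<le> moment_formula m s"
  unfolding moment_formula_def using nu lam_nonneg
  by (intro sum_nonneg mult_nonneg_nonneg frac_power_nonneg moment_coeff_nonneg) auto

lemma moment_formula_mono: "0 \<le> s \<Longrightarrow> s \<le> T \<Longrightarrow> moment_formula m s \<le> moment_formula m T"
  unfolding moment_formula_def using nu lam_nonneg
  by (intro sum_mono mult_left_mono frac_power_mono moment_coeff_nonneg) auto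

lemma truncated_moment_le_moment_formula: "0 \<le> s \<Longrightarrow> truncated_moment J m s \<le> moment_formula m s"
proof (induction m arbitrary: s rule: less_induct)
  case (less m)
  define g where "g = (\<lambda>x. 1 * truncated_moment J m x + (-1) * moment_formula m x)"
  have caputo_g: "caputo_regular \<nu> g x \<and>
      caputo \<nu> g x = caputo \<nu> (truncated_moment J m) x - caputo \<nu> (moment_formula m) x" if "0 < x" for x
    unfolding g_def
    using caputo_lincomb[OF nu(2) that, of "truncated_moment J m" "moment_formula m" 1 "-1"]
      caputo_truncated_moment[OF that] caputo_moment_formula[OF that] by simp
  have "g s \<le> 0"
  proof (rule caputo_nonpos_imp_nonpos[OF nu, of s g s])
    show "continuous_on {0..s} g" unfolding g_def
      by (intro continuous_intros continuous_on_subset[OF continuous_on_truncated_moment]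
          continuous_on_subset[OF continuous_on_moment_formula]) auto
    show "g 0 \<le> 0" unfolding g_def by (simp add: truncated_moment_at_0 moment_formula_at_0)
    fix x assume x: "x \<in> {0<..s}"
    show "caputo_regular \<nu> g x" using caputo_g x by auto
    have "caputo \<nu> g x \<le> (\<Sum>a<m. moment_kernel k lam m a * (truncated_moment J a x - moment_formula a x))"
      using caputo_g[of x] x caputo_truncated_moment_le[of x J m] caputo_moment_formula[of x m]
      by (auto simp: right_diff_distrib sum_subtractf)
    also have "\<dots> \<le> 0"
      using less.IH x by (intro sum_nonpos mult_nonneg_nonpos moment_kernel_nonneg[OF lam_nonneg]) auto
    finally show "caputo \<nu> g x \<le> 0" .
  qed (use less.prems in auto)
  then show ?case unfolding g_def by simp
qed

lemma caputo_moment_gap_le: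
  assumes J: "k \<le> J" and x: "x \<in> {0<..T}"
    and D: "\<And>a. a < m \<Longrightarrow> moment_formula a x - truncated_moment J a x \<le> D a"
  shows "caputo \<nu> (moment_formula m) x - caputo \<nu> (truncated_moment J m) x \<le>
    (\<Sum>a<m. moment_kernel k lam m a * D a) +
      total_rate * (real (k + 1) ^ m * moment_formula (Suc m) T / (real J + 1 - real k))"
proof -
  have "boundary_term J m x \<le> real (k + 1) ^ m / (real J + 1 - real k) * truncated_moment J (Suc m) x"
    using boundary_term_le[OF J, of x m] x by simp
  also have "\<dots> \<le> real (k + 1) ^ m / (real J + 1 - real k) * moment_formula (Suc m) T"
    using truncated_moment_le_moment_formula[of x J "Suc m"] moment_formula_mono[of x T "Suc m"] x J
    by (intro mult_left_mono divide_nonneg_pos) auto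
  finally have "total_rate * boundary_term J m x \<le>
      total_rate * (real (k + 1) ^ m * moment_formula (Suc m) T / (real J + 1 - real k))"
    using total_rate_nonneg by (intro mult_left_mono) auto
  moreover have "(\<Sum>a<m. moment_kernel k lam m a * (moment_formula a x - truncated_moment J a x)) \<le>
      (\<Sum>a<m. moment_kernel k lam m a * D a)"
    using D by (intro sum_mono mult_left_mono moment_kernel_nonneg[OF lam_nonneg]) auto
  moreover have "caputo \<nu> (moment_formula m) x - caputo \<nu> (truncated_moment J m) x \<le>
      (\<Sum>a<m. moment_kernel k lam m a * (moment_formula a x - truncated_moment J a x)) +
      total_rate * boundary_term J m x"
    using x caputo_truncated_moment_ge[of x m J] caputo_moment_formula[of x m]
    by (simp add: right_diff_distrib sum_subtractf)
  ultimately show ?thesis by linarith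
qed

lemma moment_formula_minus_truncated_le:
  assumes J: "k \<le> J" and s: "s \<in> {0..T}"
    and D: "\<And>a x. a < m \<Longrightarrow> x \<in> {0..T} \<Longrightarrow> moment_formula a x - truncated_moment J a x \<le> D a"
  shows "moment_formula m s - truncated_moment J m s \<le>
    ((\<Sum>a<m. moment_kernel k lam m a * D a) +
      total_rate * (real (k + 1) ^ m * moment_formula (Suc m) T / (real J + 1 - real k))) * frac_power \<nu> 1 T"
    (is "_ \<le> ?\<eta> * _")
proof -
  define h where "h = (\<lambda>x. 1 * moment_formula m x + (-1) * truncated_moment J m x)"
  have caputo_h: "caputo_regular \<nu> h x \<and>
      caputo \<nu> h x = caputo \<nu> (moment_formula m) x - caputo \<nu> (truncated_moment J m) x" if "0 < x" for x
    unfolding h_def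
    using caputo_lincomb[OF nu(2) that, of "moment_formula m" "truncated_moment J m" 1 "-1"]
      caputo_truncated_moment[OF that] caputo_moment_formula[OF that] by simp
  have "h s \<le> ?\<eta> * frac_power \<nu> 1 s"
  proof (rule caputo_le_imp_le_frac_power[OF nu, of T])
    show "continuous_on {0..T} h" unfolding h_def
      by (intro continuous_intros continuous_on_subset[OF continuous_on_truncated_moment]
          continuous_on_subset[OF continuous_on_moment_formula]) auto
    show "h 0 \<le> 0" unfolding h_def by (simp add: truncated_moment_at_0 moment_formula_at_0)
    fix x assume x: "x \<in> {0<..T}"
    show "caputo_regular \<nu> h x" using caputo_h x by auto
    show "caputo \<nu> h x \<le> ?\<eta>"
      using caputo_h[of x] caputo_moment_gap_le[OF J x, of m D] D x by auto
  qed (use s in auto)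
  also have "\<dots> \<le> ?\<eta> * frac_power \<nu> 1 T"
  proof (intro mult_left_mono frac_power_mono)
    have "0 \<le> D a" if "a < m" for a
      using D[OF that, of 0] s by (simp add: moment_formula_at_0 truncated_moment_at_0)
    moreover have "0 \<le> real (k + 1) ^ m * moment_formula (Suc m) T / (real J + 1 - real k)"
      using s J moment_formula_nonneg[of T "Suc m"] by (intro divide_nonneg_pos) auto
    ultimately show "0 \<le> ?\<eta>"
      using total_rate_nonneg
      by (intro add_nonneg_nonneg sum_nonneg mult_nonneg_nonneg moment_kernel_nonneg[OF lam_nonneg]) auto
  qed (use s nu in auto)
  finally show ?thesis unfolding h_def by simp
qed

lemma truncated_moment_uniform_approx:
  assumes "0 \<le> T"
  shows "\<exists>\<delta>. \<delta> \<longlonglongrightarrow> 0 \<and>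
    (\<forall>J\<ge>k. \<forall>s\<in>{0..T}. moment_formula m s - truncated_moment J m s \<le> \<delta> J)"
proof (induction m rule: less_induct)
  case (less m)
  then have "\<forall>a\<in>{..<m}. \<exists>\<delta>. \<delta> \<longlonglongrightarrow> 0 \<and>
      (\<forall>J\<ge>k. \<forall>s\<in>{0..T}. moment_formula a s - truncated_moment J a s \<le> \<delta> J)"
    by auto
  then obtain D where D: "\<And>a. a \<in> {..<m} \<Longrightarrow> D a \<longlonglongrightarrow> 0 \<and>
      (\<forall>J\<ge>k. \<forall>s\<in>{0..T}. moment_formula a s - truncated_moment J a s \<le> D a J)"
    by (metis bchoice)
  define C where "C = real (k + 1) ^ m * moment_formula (Suc m) T"
  define \<delta> where "\<delta> = (\<lambda>J. ((\<Sum>a<m. moment_kernel k lam m a * D a J) +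
      total_rate * (C / (real J + 1 - real k))) * frac_power \<nu> 1 T)"
  have "(\<lambda>J. C / (real J + 1 - real k)) \<longlonglongrightarrow> 0" by real_asymp
  with D have "\<delta> \<longlonglongrightarrow> ((\<Sum>a<m. moment_kernel k lam m a * 0) + total_rate * 0) * frac_power \<nu> 1 T"
    unfolding \<delta>_def by (intro tendsto_intros) auto
  moreover have "moment_formula m s - truncated_moment J m s \<le> \<delta> J" if "k \<le> J" "s \<in> {0..T}" for J s
    unfolding \<delta>_def C_def using that D
    by (intro moment_formula_minus_truncated_le) auto
  ultimately show ?case by auto
qed

lemma moment_sums:
  assumes t: "0 \<le> t"
  shows "(\<lambda>j. real j ^ m * p j t) sums moment_formula m t"
proof -
  obtain \<delta> where lim: "\<delta> \<longlonglongrightarrow> 0"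
    and approx: "\<And>J. k \<le> J \<Longrightarrow> moment_formula m t - truncated_moment J m t \<le> \<delta> J"
    using truncated_moment_uniform_approx[OF t, of m] t by auto
  have "(\<lambda>J. truncated_moment J m t) \<longlonglongrightarrow> moment_formula m t"
  proof (rule tendsto_sandwich[of "\<lambda>J. moment_formula m t - \<delta> J" _ _ "\<lambda>J. moment_formula m t"])
    show "eventually (\<lambda>J. moment_formula m t - \<delta> J \<le> truncated_moment J m t) sequentially"
      using approx by (intro eventually_sequentiallyI[of k]) force
    show "eventually (\<lambda>J. truncated_moment J m t \<le> moment_formula m t) sequentially"
      using truncated_moment_le_moment_formula[OF t] by simp
    show "(\<lambda>J. moment_formula m t - \<delta> J) \<longlonglongrightarrow> moment_formula m t"
      using tendsto_diff[OF tendsto_const lim, of "moment_formula m t"] by simp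
  qed simp
  then have "(\<lambda>n. \<Sum>j<Suc n. real j ^ m * p j t) \<longlonglongrightarrow> moment_formula m t"
    unfolding truncated_moment_def by (simp add: lessThan_Suc_atMost)
  then show ?thesis unfolding sums_def by (rule LIMSEQ_imp_Suc)
qed

end

theorem lemma4p1:
  fixes \<nu> :: real and k :: nat and lam :: "nat \<Rightarrow> real"
    and p :: "nat \<Rightarrow> real \<Rightarrow> real" and m :: nat and t :: real
  assumes nu: "0 < \<nu>" "\<nu> \<le> 1"
    and k: "1 \<le> k"
    and lam_pos: "\<And>l. l \<in> {1..k} \<Longrightarrow> 0 < lam l"
    and prob_nonneg: "\<And>j s. 0 \<le> s \<Longrightarrow> 0 \<le> p j s"
    and prob_sum: "\<And>s. 0 \<le> s \<Longrightarrow> (\<lambda>j. p j s) sums 1"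
    and cont: "\<And>j. continuous_on {0..} (p j)"
    and diff: "\<And>j s. 0 < s \<Longrightarrow> p j differentiable (at s)"
    and integr: "\<And>j s. \<nu> < 1 \<Longrightarrow> 0 < s \<Longrightarrow>
                   (\<lambda>u. deriv (p j) u / (s - u) powr \<nu>) integrable_on {0..s}"
    and eq0: "\<And>s. 0 < s \<Longrightarrow> caputo \<nu> (p 0) s = - (\<Sum>l=1..k. lam l) * p 0 s"
    and eq_low: "\<And>j s. 1 \<le> j \<Longrightarrow> j \<le> k - 1 \<Longrightarrow> 0 < s \<Longrightarrow>
                   caputo \<nu> (p j) s = (\<Sum>r=1..j. lam r * p (j - r) s) - (\<Sum>l=1..k. lam l) * p j s"
    and eq_high: "\<And>j s. k \<le> j \<Longrightarrow> 0 < s \<Longrightarrow>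
                   caputo \<nu> (p j) s = (\<Sum>r=1..k. lam r * p (j - r) s) - (\<Sum>l=1..k. lam l) * p j s"
    and init0: "p 0 0 = 1"
    and initj: "\<And>j. 1 \<le> j \<Longrightarrow> p j 0 = 0"
    and t: "0 \<le> t"
  shows "(\<lambda>j. real j ^ m * p j t) sums
     (\<Sum>r=0..m. (t powr \<nu>) ^ r / Gamma (real r * \<nu> + 1) *
        (\<Sum>i\<in>compositions k r. multinom k r i * (\<Prod>l=1..k. lam l ^ i l) *
           (\<Sum>n\<in>compositions k m. multinom k m n *
              (\<Prod>l=1..k. (deriv ^^ n l) (\<lambda>s. (exp (real l * s) - 1) ^ i l) 0))))"
proof -
  have lam_nonneg: "\<And>l. l \<in> {1..k} \<Longrightarrow> 0 \<le> lam l"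
    using lam_pos by (simp add: less_imp_le)
  interpret fractional_counting_system \<nu> k lam p
    by unfold_locales (fact nu lam_nonneg prob_nonneg cont diff integr eq0 eq_low eq_high init0 initj)+
  show ?thesis
    using moment_sums[OF t, of m]
    unfolding moment_formula_def moment_coeff_multinomial_form atLeast0AtMost frac_power_def
    by (simp add: mult_ac)
qed

end
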